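(* Let $q$ be a prime power, let $\lambda \in \mathbb{F}_{q^n}\setminus\mathbb{F}_q$, $t = [\mathbb{F}_q(\lambda):\mathbb{F}_q]$, let $\overline{S}$ be an $\mathbb{F}_{q^t}$-subspace of $\mathbb{F}_{q^n}$ of $\mathbb{F}_{q^t}$-dimension $l>0$, $b \in \mathbb{F}_{q^n}^*$ with $\mathbb{F}_{q^t}\cap b\overline{S}=\{0\}$, $0<m<t$, $k = tl+m$ with $t+1 \le k \le n$, and $S = \overline{S} \oplus b\langle 1, \lambda, \ldots, \lambda^{m-1}\rangle_{\mathbb{F}_q}$, with $Y=\langle S\rangle_{\mathbb{F}_{q^t}} = \mathbb{F}_{q^n}$, $2m \ge t-1$ and $r = 2m+t(l-1)$. If $\mathcal{C}=\mathrm{Orb}(S)$ is an $r$-FWS code and $\mu \in \mathbb{F}_{q^n}^*$ with $\mu \notin H(\overline{S})$, then $\dim_{\mathbb{F}_q}(S \cap \mu S) = t(l-1)+2m$.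
   Context: $\mathrm{Orb}(S)=\{\alpha S:\alpha\in\mathbb{F}_{q^n}^*\}$. For an $\mathbb{F}_q$-subspace $V$ of $\mathbb{F}_{q^n}$, $H(V) = \{x \in \mathbb{F}_{q^n}^* : xV = V\} \cup \{0\}$. With $d(U,V)=2k-2\dim_{\mathbb{F}_q}(U\cap V)$ and $\omega_{2i}(\mathcal{C})=|\{\alpha S: \alpha\in\mathbb{F}_{q^n}^*, d(S,\alpha S)=2i\}|$ for $i=1,\dots,k$, $\mathcal{C}$ is an $r$-FWS code if $\omega_{2i}=0$ for $i=k-r+1,\ldots,k$ and $\omega_{2i}\neq 0$ for all $i=1,\ldots,k-r$. $\langle S\rangle_{\mathbb{F}_{q^t}}$ denotes the $\mathbb{F}_{q^t}$-span of $S$. *)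

theory Defs
  imports "HOL-Algebra.Embedded_Algebras" "HOL-Algebra.Generated_Fields"
begin

definition smul_set :: "('a, 'b) ring_scheme \<Rightarrow> 'a \<Rightarrow> 'a set \<Rightarrow> 'a set"
  where "smul_set R a V = (\<lambda>x. a \<otimes>\<^bsub>R\<^esub> x) ` V"

definition set_span :: "('a, 'b) ring_scheme \<Rightarrow> 'a set \<Rightarrow> 'a set \<Rightarrow> 'a set"
  where "set_span R L A = \<Union> {ring.Span R L Us | Us. set Us \<subseteq> A}"

text \<open>Subspace distance d(U,V) = 2k - 2 dim(U inter V), k = dim U (= dim V for orbit elements).\<close>
definition subspace_dist :: "('a, 'b) ring_scheme \<Rightarrow> 'a set \<Rightarrow> 'a set \<Rightarrow> 'a set \<Rightarrow> nat"
  where "subspace_dist R K U V = 2 * ring.dim R K U - 2 * ring.dim R K (U \<inter> V)"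

text \<open>omega_{2i}(Orb(S)) = number of distinct alpha S with d(S, alpha S) = 2i.\<close>
definition orb_weight :: "('a, 'b) ring_scheme \<Rightarrow> 'a set \<Rightarrow> 'a set \<Rightarrow> nat \<Rightarrow> nat"
  where "orb_weight R K S i =
    card {smul_set R \<alpha> S | \<alpha>. \<alpha> \<in> carrier R - {\<zero>\<^bsub>R\<^esub>} \<and>
                               subspace_dist R K S (smul_set R \<alpha> S) = 2 * i}"

definition is_FWS :: "('a, 'b) ring_scheme \<Rightarrow> 'a set \<Rightarrow> 'a set \<Rightarrow> nat \<Rightarrow> bool"
  where "is_FWS R K S r =
    (let k = ring.dim R K S in
      (\<forall>i \<in> {k - r + 1..k}. orb_weight R K S i = 0) \<and>
      (\<forall>i \<in> {1..k - r}. orb_weight R K S i \<noteq> 0))"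

definition stab :: "('a, 'b) ring_scheme \<Rightarrow> 'a set \<Rightarrow> 'a set"
  where "stab R V = {x \<in> carrier R - {\<zero>\<^bsub>R\<^esub>}. smul_set R x V = V} \<union> {\<zero>\<^bsub>R\<^esub>}"

end

theory Submission
  imports Defs
begin

(* Write L for the field generated by lam over K, so that L has K-dimension t. Since S lies in
   Sbar + L b and spans the whole field over L, Sbar is an L-hyperplane and n = t (l + 1).
   As mu is not in H(Sbar), some mu x with x in Sbar lies outside Sbar; then Sbar + L mu x is
   the whole field, and a fortiori so is S + mu S. Grassmann's formula gives
   dim (S inter mu S) = 2 dim S - n, which is below dim S and at most 2 (t l + m) - t (l + 1) = r.
   Were it below r, mu S would contribute to the weight omega_{2i} with
   i = dim S - dim (S inter mu S) > dim S - r, which the r-FWS property forbids. *)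

lemma (in ring) subalgebra_finite_dimension:
  assumes K: "subfield K R" and fin: "finite (carrier R)" and V: "subalgebra K V R"
  shows "finite_dimension K V"
proof -
  obtain xs where xs: "set xs = carrier R"
    using finite_list[OF fin] by blast
  have "Span K xs = carrier R"
    using Span_in_carrier[OF subfieldE(3)[OF K], of xs] Span_base_incl[OF K, of xs] xs by auto
  then have "finite_dimension K (carrier R)"
    using Span_finite_dimension[OF K, of xs] xs by simp
  then show ?thesis
    using subalbegra_incl_imp_finite_dimension[OF K _ V subalgebra_in_carrier[OF V]] by blast
qed

lemma (in ring) subalgebra_of_subfield:
  assumes "subfield L R" and "K \<subseteq> L"
  shows "subalgebra K L R"
  using subring.axioms(1)[OF subfieldE(1)[OF assms(1)]] subringE(6)[OF subfieldE(1)[OF assms(1)]] assms(2)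
  unfolding subalgebra_def subalgebra_axioms_def additive_subgroup_def by auto

lemma (in ring) subalgebra_restrict_scalars:
  assumes "subalgebra L V R" and "K \<subseteq> L"
  shows "subalgebra K V R"
  using assms unfolding subalgebra_def subalgebra_axioms_def by auto

lemma (in ring) dim_tower:
  assumes K: "subfield K R" and L: "subfield L R" and KL: "K \<subseteq> L"
    and fin: "finite (carrier R)" and V: "subalgebra L V R"
  shows "dim K V = dim K L * dim L V"
  using telescopic_base_dim(2)[OF K L subalgebra_finite_dimension[OF K fin subalgebra_of_subfield[OF L KL]]
      subalgebra_finite_dimension[OF L fin V]]
  unfolding over_def .

lemma (in ring) subfield_nat_pow_closed:
  assumes "subfield L R" and "x \<in> L"
  shows "x [^] (n :: nat) \<in> L"
  using subringE(3,6)[OF subfieldE(1)[OF assms(1)]] assms(2) by (induction n) auto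

lemma (in ring) dim_le_of_subset:
  assumes K: "subfield K R" and F: "finite_dimension K F" and E: "subalgebra K E R" and EF: "E \<subseteq> F"
  shows "dim K E \<le> dim K F"
proof -
  have "finite_dimension K E"
    using subalbegra_incl_imp_finite_dimension[OF K F E EF] .
  then obtain Us where Us: "independent K Us" "length Us = dim K E" "Span K Us = E"
    using exists_base[OF K finite_dimensionE[OF K]] unfolding over_def by blast
  have "set Us \<subseteq> F"
    using Span_base_incl[OF K independent_in_carrier[OF Us(1)]] Us(3) EF by auto
  then show ?thesis
    using independent_length_le_dimension[OF K finite_dimensionE[OF K F] Us(1)] Us(2)
    unfolding over_def by simp
qed

lemma (in ring) subalgebra_eq_of_dim_eq:
  assumes K: "subfield K R" and F: "finite_dimension K F" and E: "subalgebra K E R" and EF: "E \<subseteq> F"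
    and eq: "dim K E = dim K F"
  shows "E = F"
proof -
  have "finite_dimension K E"
    using subalbegra_incl_imp_finite_dimension[OF K F E EF] .
  then obtain Us where Us: "independent K Us" "length Us = dim K E" "Span K Us = E"
    using exists_base[OF K finite_dimensionE[OF K]] unfolding over_def by blast
  have "set Us \<subseteq> F"
    using Span_base_incl[OF K independent_in_carrier[OF Us(1)]] Us(3) EF by auto
  then show ?thesis
    using independent_length_eq_dimension[OF K finite_dimensionE[OF K F] Us(1)] Us(2,3) eq
    unfolding over_def by simp
qed

lemma (in ring) dim_Span_le_length:
  assumes K: "subfield K R" and Us: "set Us \<subseteq> carrier R"
  shows "dim K (Span K Us) \<le> length Us"
proof -
  have "\<exists>n \<le> length Us. dimension n K (Span K Us)"
    using Us
  proof (induction Us)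
    case Nil
    then show ?case by auto
  next
    case (Cons u Us)
    then obtain n where n: "n \<le> length Us" "dimension n K (Span K Us)"
      by auto
    show ?case
    proof (cases "u \<in> Span K Us")
      case True
      then have "Span K (u # Us) = Span K Us"
        using Cons.prems Span_base_incl[OF K] mono_Span_subset[OF K]
        by (metis insert_subset list.simps(15) subset_antisym)
      then show ?thesis
        using n by (intro exI[of _ n]) auto
    next
      case False
      then have "dimension (Suc n) K (Span K (u # Us))"
        using Suc_dim n(2) Cons.prems by simp
      then show ?thesis
        using n(1) by fastforce
    qed
  qed
  then show ?thesis
    using dimI[OF K] unfolding over_def by fastforce
qed

lemma (in cring) mult_combine:
  "\<lbrakk> set Ks \<subseteq> carrier R; set Us \<subseteq> carrier R; a \<in> carrier R \<rbrakk> \<Longrightarrow>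
     a \<otimes> combine Ks Us = combine Ks (map ((\<otimes>) a) Us)"
  by (induct Ks Us rule: combine.induct) (auto simp add: r_distr m_lcomm)

lemma (in cring) smul_set_Span:
  assumes K: "subfield K R" and Us: "set Us \<subseteq> carrier R" and a: "a \<in> carrier R"
  shows "smul_set R a (Span K Us) = Span K (map ((\<otimes>) a) Us)"
proof -
  have aUs: "set (map ((\<otimes>) a) Us) \<subseteq> carrier R"
    using Us a by auto
  have "a \<otimes> combine Ks Us = combine Ks (map ((\<otimes>) a) Us)" if "set Ks \<subseteq> K" for Ks
    using mult_combine[OF _ Us a] that subfieldE(3)[OF K] by blast
  then show ?thesis
    unfolding smul_set_def Span_eq_combine_set[OF K Us] Span_eq_combine_set[OF K aUs]
      setcompr_eq_image image_image
    by (intro image_cong) auto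
qed

lemma (in cring) smul_set_Span_dim_le:
  assumes K: "subfield K R" and Us: "set Us \<subseteq> carrier R" and a: "a \<in> carrier R"
  shows "finite_dimension K (smul_set R a (Span K Us))"
    and "dim K (smul_set R a (Span K Us)) \<le> length Us"
proof -
  have aUs: "set (map ((\<otimes>) a) Us) \<subseteq> carrier R"
    using Us a by auto
  show "finite_dimension K (smul_set R a (Span K Us))"
    "dim K (smul_set R a (Span K Us)) \<le> length Us"
    using smul_set_Span[OF K Us a] Span_finite_dimension[OF K aUs] dim_Span_le_length[OF K aUs]
    by simp_all
qed

lemma (in cring) dim_set_add_smul_set_Span_le:
  assumes K: "subfield K R" and L: "subfield L R" and KL: "K \<subseteq> L" and fin: "finite (carrier R)"
    and V: "subalgebra L V R" and Us: "set Us \<subseteq> carrier R" and b: "b \<in> carrier R"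
  shows "finite_dimension K (V <+>\<^bsub>R\<^esub> smul_set R b (Span K Us))"
    and "dim K (V <+>\<^bsub>R\<^esub> smul_set R b (Span K Us)) \<le> dim K L * dim L V + length Us"
proof -
  have fdV: "finite_dimension K V"
    using subalgebra_finite_dimension[OF K fin subalgebra_restrict_scalars[OF V KL]] .
  note B = smul_set_Span_dim_le[OF K Us b]
  show "finite_dimension K (V <+>\<^bsub>R\<^esub> smul_set R b (Span K Us))"
    using sum_space_dim(1)[OF K fdV B(1)] .
  show "dim K (V <+>\<^bsub>R\<^esub> smul_set R b (Span K Us)) \<le> dim K L * dim L V + length Us"
    using sum_space_dim(2)[OF K fdV B(1)] B(2) dim_tower[OF K L KL fin V]
    unfolding over_def by linarith
qed

lemma (in field) smul_set_dim:
  assumes K: "subfield K R" and E: "finite_dimension K E" and a: "a \<in> carrier R" "a \<noteq> \<zero>"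
  shows "finite_dimension K (smul_set R a E)" and "dim K (smul_set R a E) = dim K E"
proof -
  have le: "finite_dimension K (smul_set R c F) \<and> dim K (smul_set R c F) \<le> dim K F"
    if F: "finite_dimension K F" and c: "c \<in> carrier R" for c F
  proof -
    obtain Us where Us: "set Us \<subseteq> carrier R" "length Us = dim K F" "Span K Us = F"
      using exists_base[OF K finite_dimensionE[OF K F]] unfolding over_def by blast
    then show ?thesis
      using smul_set_Span_dim_le[OF K Us(1) c] by simp
  qed
  have "E \<subseteq> carrier R"
    using subalgebra_in_carrier[OF finite_dimension_imp_subalgebra[OF K E]] .
  moreover have "inv a \<otimes> (a \<otimes> x) = x" if "x \<in> carrier R" for x
    using that a by (simp add: m_assoc[symmetric] field_Units)
  ultimately have "smul_set R (inv a) (smul_set R a E) = E"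
    unfolding smul_set_def image_image by (simp add: subset_iff)
  then show "finite_dimension K (smul_set R a E)" "dim K (smul_set R a E) = dim K E"
    using le[OF E a(1)] le[of "smul_set R a E" "inv a"] a by (auto simp: field_Units)
qed

lemma (in ring) dim_line_extension:
  assumes K: "subfield K R" and E: "finite_dimension K E" and v: "v \<in> carrier R" "v \<notin> E"
  shows "finite_dimension K (line_extension K v E)"
    and "dim K (line_extension K v E) = Suc (dim K E)"
  using Suc_dim[OF v finite_dimensionE[OF K E]] finite_dimensionI dimI[OF K]
  unfolding over_def by auto

lemma (in ring) line_extension_eq_carrier:
  assumes L: "subfield L R" and C: "finite_dimension L (carrier R)" and V: "subalgebra L V R"
    and dim_eq: "dim L (carrier R) = Suc (dim L V)" and v: "v \<in> carrier R" "v \<notin> V"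
  shows "line_extension L v V = carrier R"
proof -
  have "finite_dimension L V"
    using subalbegra_incl_imp_finite_dimension[OF L C V subalgebra_in_carrier[OF V]] .
  note W = dim_line_extension[OF L this v]
  show ?thesis
    using subalgebra_eq_of_dim_eq[OF L C finite_dimension_imp_subalgebra[OF L W(1)]]
      line_extension_in_carrier[OF subfieldE(3)[OF L] v(1) subalgebra_in_carrier[OF V]] W(2) dim_eq
    by simp
qed

lemma (in ring) set_span_subalgebra_incl:
  assumes "subfield K R" and "subalgebra K V R" and "S \<subseteq> V"
  shows "set_span R K S \<subseteq> V"
  using subalgebra_Span_incl[OF assms(1,2)] assms(3) unfolding set_span_def by blast

lemma (in ring) dim_carrier_eq_Suc_dim:
  assumes L: "subfield L R" and fin: "finite (carrier R)" and V: "subalgebra L V R"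
    and v: "v \<in> carrier R" "v \<notin> V"
    and S: "S \<subseteq> line_extension L v V" and span: "set_span R L S = carrier R"
  shows "dim L (carrier R) = Suc (dim L V)"
proof -
  note W = dim_line_extension[OF L subalgebra_finite_dimension[OF L fin V] v]
  have "set_span R L S \<subseteq> line_extension L v V"
    using set_span_subalgebra_incl[OF L finite_dimension_imp_subalgebra[OF L W(1)] S] .
  then have "line_extension L v V = carrier R"
    using line_extension_in_carrier[OF subfieldE(3)[OF L] v(1) subalgebra_in_carrier[OF V]] span
    by blast
  then show ?thesis
    using W(2) by simp
qed

lemma (in cring) set_add_smul_set_Span_subset_line_extension:
  assumes K: "subfield K R" and L: "subfield L R" and KL: "K \<subseteq> L"
    and Us: "set Us \<subseteq> L" and V: "V \<subseteq> carrier R" and b: "b \<in> carrier R"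
  shows "V <+>\<^bsub>R\<^esub> smul_set R b (Span K Us) \<subseteq> line_extension L b V"
proof
  fix w
  assume "w \<in> V <+>\<^bsub>R\<^esub> smul_set R b (Span K Us)"
  then obtain h z where hz: "h \<in> V" "z \<in> Span K Us" "w = h \<oplus> b \<otimes> z"
    unfolding set_add_def' smul_set_def by blast
  have "z \<in> L"
    using subalgebra_Span_incl[OF K subalgebra_of_subfield[OF L KL] Us] hz(2) by blast
  moreover have "w = z \<otimes> b \<oplus> h"
  proof -
    have "z \<in> carrier R" "h \<in> carrier R"
      using \<open>z \<in> L\<close> subfieldE(3)[OF L] hz(1) V by auto
    then show ?thesis
      using hz(3) b by (simp add: a_comm m_comm)
  qed
  ultimately show "w \<in> line_extension L b V"
    unfolding line_extension_mem_iff using hz(1) by blast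
qed

lemma (in domain) stab_iff_smul_set_subset:
  assumes fin: "finite V" and V: "V \<subseteq> carrier R" and \<mu>: "\<mu> \<in> carrier R" "\<mu> \<noteq> \<zero>"
  shows "\<mu> \<in> stab R V \<longleftrightarrow> smul_set R \<mu> V \<subseteq> V"
proof
  assume "smul_set R \<mu> V \<subseteq> V"
  moreover have "inj_on ((\<otimes>) \<mu>) V"
    using m_lcancel[OF \<mu>(2,1)] V by (auto simp: inj_on_def)
  then have "card (smul_set R \<mu> V) = card V"
    unfolding smul_set_def by (rule card_image)
  ultimately have "smul_set R \<mu> V = V"
    using card_subset_eq[OF fin] by blast
  then show "\<mu> \<in> stab R V"
    unfolding stab_def using \<mu> by auto
qed (use \<mu> in \<open>auto simp: stab_def\<close>)

lemma (in domain) set_add_smul_set_eq_carrier: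
  assumes L: "subfield L R" and fin: "finite (carrier R)" and V: "subalgebra L V R"
    and dim_eq: "dim L (carrier R) = Suc (dim L V)"
    and \<mu>: "\<mu> \<in> carrier R" "\<mu> \<noteq> \<zero>" "\<mu> \<notin> stab R V"
    and S: "V \<subseteq> S" "S \<subseteq> carrier R"
  shows "S <+>\<^bsub>R\<^esub> smul_set R \<mu> S = carrier R"
proof
  show "S <+>\<^bsub>R\<^esub> smul_set R \<mu> S \<subseteq> carrier R"
    using S(2) \<mu>(1) unfolding set_add_def' smul_set_def by auto
  have VC: "V \<subseteq> carrier R"
    using subalgebra_in_carrier[OF V] .
  obtain x where x: "x \<in> V" "\<mu> \<otimes> x \<notin> V"
    using stab_iff_smul_set_subset[OF finite_subset[OF VC fin] VC \<mu>(1,2)] \<mu>(3)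
    unfolding smul_set_def by blast
  have "line_extension L (\<mu> \<otimes> x) V = carrier R"
    using line_extension_eq_carrier[OF L _ V dim_eq _ x(2)] x(1) VC \<mu>(1)
      subalgebra_finite_dimension[OF L fin carrier_is_subalgebra[OF subfieldE(3)[OF L]]]
    by blast
  moreover have "line_extension L (\<mu> \<otimes> x) V \<subseteq> S <+>\<^bsub>R\<^esub> smul_set R \<mu> S"
  proof
    fix w
    assume "w \<in> line_extension L (\<mu> \<otimes> x) V"
    then obtain c h where ch: "c \<in> L" "h \<in> V" "w = c \<otimes> (\<mu> \<otimes> x) \<oplus> h"
      unfolding line_extension_mem_iff by blast
    have "c \<otimes> x \<in> V"
      using subalgebra.smult_closed[OF V ch(1) x(1)] .
    moreover have "w = h \<oplus> \<mu> \<otimes> (c \<otimes> x)"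
    proof -
      have "c \<in> carrier R" "h \<in> carrier R" "x \<in> carrier R"
        using ch(1,2) x(1) subfieldE(3)[OF L] VC by auto
      then show ?thesis
        using ch(3) \<mu>(1) by (simp add: a_comm m_lcomm)
    qed
    ultimately show "w \<in> S <+>\<^bsub>R\<^esub> smul_set R \<mu> S"
      unfolding set_add_def' smul_set_def using ch(2) S(1) by blast
  qed
  ultimately show "carrier R \<subseteq> S <+>\<^bsub>R\<^esub> smul_set R \<mu> S"
    by simp
qed

lemma (in field) dim_inter_smul_set:
  assumes K: "subfield K R" and S: "finite_dimension K S" and \<mu>: "\<mu> \<in> carrier R" "\<mu> \<noteq> \<zero>"
    and sum: "S <+>\<^bsub>R\<^esub> smul_set R \<mu> S = carrier R"
  shows "dim K (S \<inter> smul_set R \<mu> S) + dim K (carrier R) = 2 * dim K S"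
proof -
  note \<mu>S = smul_set_dim[OF K S \<mu>]
  have "dim K (S \<inter> smul_set R \<mu> S) \<le> dim K S"
    using dim_le_of_subset[OF K S subalgebra_inter] finite_dimension_imp_subalgebra[OF K] S \<mu>S(1)
    by blast
  moreover have "dim K (carrier R) = dim K S + dim K S - dim K (S \<inter> smul_set R \<mu> S)"
    using sum_space_dim(2)[OF K S \<mu>S(1)] \<mu>S(2) sum unfolding over_def by simp
  ultimately show ?thesis
    by simp
qed

lemma is_FWS_dim_inter_smul_set_ge:
  assumes fin: "finite (carrier R)" and FWS: "is_FWS R K S r"
    and \<mu>: "\<mu> \<in> carrier R" "\<mu> \<noteq> \<zero>\<^bsub>R\<^esub>"
    and lt: "ring.dim R K (S \<inter> smul_set R \<mu> S) < ring.dim R K S"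
  shows "r \<le> ring.dim R K (S \<inter> smul_set R \<mu> S)"
proof (rule ccontr)
  define j where "j = ring.dim R K (S \<inter> smul_set R \<mu> S)"
  define k where "k = ring.dim R K S"
  define i where "i = k - j"
  assume "\<not> r \<le> ring.dim R K (S \<inter> smul_set R \<mu> S)"
  then have "i \<in> {k - r + 1..k}"
    using lt unfolding i_def j_def k_def by auto
  then have "orb_weight R K S i = 0"
    using FWS unfolding is_FWS_def Let_def k_def by blast
  moreover have "finite {smul_set R \<alpha> S | \<alpha>. \<alpha> \<in> carrier R - {\<zero>\<^bsub>R\<^esub>} \<and>
                           subspace_dist R K S (smul_set R \<alpha> S) = 2 * i}"
    by (rule finite_subset[of _ "(\<lambda>\<alpha>. smul_set R \<alpha> S) ` carrier R"]) (use fin in auto)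
  moreover have "subspace_dist R K S (smul_set R \<mu> S) = 2 * i"
    unfolding subspace_dist_def i_def j_def k_def by (simp add: diff_mult_distrib2)
  ultimately show False
    using \<mu> unfolding orb_weight_def by auto
qed

lemma (in field) is_FWS_dim_inter_smul_set_eq:
  assumes K: "subfield K R" and fin: "finite (carrier R)" and FWS: "is_FWS R K S r"
    and S: "finite_dimension K S" and \<mu>: "\<mu> \<in> carrier R" "\<mu> \<noteq> \<zero>"
    and sum: "S <+>\<^bsub>R\<^esub> smul_set R \<mu> S = carrier R"
    and lt: "dim K S < dim K (carrier R)" and le: "2 * dim K S \<le> dim K (carrier R) + r"
  shows "dim K (S \<inter> smul_set R \<mu> S) = r"
proof -
  have "dim K (S \<inter> smul_set R \<mu> S) + dim K (carrier R) = 2 * dim K S"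
    using dim_inter_smul_set[OF K S \<mu> sum] .
  then have "dim K (S \<inter> smul_set R \<mu> S) < dim K S" and "dim K (S \<inter> smul_set R \<mu> S) \<le> r"
    using lt le by linarith+
  then show ?thesis
    using is_FWS_dim_inter_smul_set_ge[OF fin FWS \<mu>] by force
qed

theorem theorem4p9:
  fixes R (structure) and K Sbar :: "'a set" and lam b \<mu> :: 'a and m l :: nat
  assumes fieldR: "field R" and finR: "finite (carrier R)" and subK: "subfield K R"
    and lam: "lam \<in> carrier R" "lam \<notin> K"
    and L_def: "L = generate_field R (insert lam K)"
    and t_def: "t = ring.dim R K L"
    and n_def: "n = ring.dim R K (carrier R)"
    and Sbar_sub: "subalgebra L Sbar R"
    and l_def: "l = ring.dim R L Sbar" and l_pos: "l > 0"
    and b: "b \<in> carrier R" "b \<noteq> \<zero>"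
    and bSbar: "L \<inter> smul_set R b Sbar = {\<zero>}"
    and m: "0 < m" "m < t"
    and k_def: "k = t * l + m" and k_bounds: "t + 1 \<le> k" "k \<le> n"
    and B_def: "B = smul_set R b (ring.Span R K (map (\<lambda>i. lam [^] i) [0..<m]))"
    and direct: "Sbar \<inter> B = {\<zero>}"
    and S_def: "S = Sbar <+>\<^bsub>R\<^esub> B"
    and Y: "set_span R L S = carrier R"
    and m_big: "2 * m \<ge> t - 1"
    and r_def: "r = 2 * m + t * (l - 1)"
    and FWS: "is_FWS R K S r"
    and mu: "\<mu> \<in> carrier R" "\<mu> \<noteq> \<zero>" "\<mu> \<notin> stab R Sbar"
  shows "ring.dim R K (S \<inter> smul_set R \<mu> S) = t * (l - 1) + 2 * m"
proof -
  interpret field R by (rule fieldR)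
  define ls where "ls = map (\<lambda>i. lam [^] i) [0..<m]"
  have subL: "subfield L R"
    unfolding L_def using subfieldE(3)[OF subK] lam(1) by (intro generate_field_is_subfield) auto
  have KL: "K \<subseteq> L" and lamL: "lam \<in> L"
    unfolding L_def by (auto intro: generate_field.incl)
  have lsL: "set ls \<subseteq> L" and lsC: "set ls \<subseteq> carrier R"
    unfolding ls_def using subfield_nat_pow_closed[OF subL lamL] subfieldE(3)[OF subL] by auto
  have fdS: "finite_dimension K S" and dim_S: "dim K S \<le> t * l + m"
    using dim_set_add_smul_set_Span_le[OF subK subL KL finR Sbar_sub lsC b(1)] t_def l_def
    unfolding S_def B_def ls_def by simp_all
  have "\<zero> \<in> B" and "b \<in> B"
    using Span_base_incl[OF subK lsC] Span_subgroup_props(2)[OF subK lsC] m(1) b(1)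
    unfolding B_def ls_def[symmetric] smul_set_def by (force simp: ls_def)+
  then have "Sbar \<subseteq> S" and "b \<notin> Sbar"
    using subalgebra_in_carrier[OF Sbar_sub] direct b(2) unfolding S_def set_add_def' by force+
  have "dim L (carrier R) = Suc l"
    using dim_carrier_eq_Suc_dim[OF subL finR Sbar_sub b(1) \<open>b \<notin> Sbar\<close> _ Y] l_def
      set_add_smul_set_Span_subset_line_extension[OF subK subL KL lsL subalgebra_in_carrier[OF Sbar_sub] b(1)]
    unfolding S_def B_def ls_def by simp
  moreover have "n = t * dim L (carrier R)"
    using dim_tower[OF subK subL KL finR carrier_is_subalgebra[OF subfieldE(3)[OF subL]]] t_def n_def
    by simp
  moreover have "t * (l - 1) + t = t * l"
    using l_pos by (cases l) simp_all
  ultimately have "dim K S < n" and "2 * dim K S \<le> n + r"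
    using dim_S m(2) r_def by simp_all
  moreover have "S <+>\<^bsub>R\<^esub> smul_set R \<mu> S = carrier R"
    using set_add_smul_set_eq_carrier[OF subL finR Sbar_sub _ mu \<open>Sbar \<subseteq> S\<close>] l_def
      \<open>dim L (carrier R) = Suc l\<close> subalgebra_in_carrier[OF finite_dimension_imp_subalgebra[OF subK fdS]]
    by simp
  ultimately show ?thesis
    using is_FWS_dim_inter_smul_set_eq[OF subK finR FWS fdS mu(1,2)] n_def r_def by simp
qed

end
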